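(* Suppose the weights are $w_i=z_i\|\phi_i\|_{L^\infty}$ for some $z_i\ge1$, $i\in\mathbb N$. Then for all $M,R\in\mathbb N$, $$F(h,M,R)\le\frac{\sqrt M\sqrt{1+E(h,M)}}{\inf_{i>R}\{z_i\}}.$$
   Context: Setting: $D\subseteq\mathbb R^d$ a domain, $\nu\ge0$ integrable on $D$ with $\int_D\nu=1$, $\{\phi_i\}_{i\in\mathbb N}\subseteq L^2_\nu(D)\cap L^\infty(D)$ orthonormal in $L^2_\nu(D)$. $T=\{t_n\}_{n=1}^N\subseteq\overline D$ with density $h=\sup_{t\in D}\min_n|t-t_n|$, Voronoi cells $V_n=\{t\in D:|t-t_n|\le|t-t_m|\ \forall m\ne n\}$ and quadrature weights $\tau_n=\int_{V_n}\nu$. $U$ is the $N\times\infty$ matrix $U_{n,i}=\sqrt{\tau_n}\phi_i(t_n)$; $W=\mathrm{diag}(w_1,w_2,\dots)$. $P_M$ is the projection onto the first $M$ coordinates, $P_R^\perp=I-P_R$. Define $E_2(h,M)=\|P_M-P_MU^*UP_M\|$ ($\ell^2$ operator norm), $E_\infty(h,M)=\|P_M-P_MU^*UP_M\|_\infty$ ($\ell^\infty$ operator norm), $E(h,M)=\max\{E_2(h,M),E_\infty(h,M)\}$ and $F(h,M,R)=\|P_R^\perp W^{-1}U^*UP_M\|_\infty$; these depend on the point set $T$. *)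

theory Defs
  imports "HOL-Analysis.Analysis"
begin

text \<open>Points t 0, ..., t (N-1) (0-based); coordinates i :: nat are 0-based, so
  P_M projects onto indices {..<M} and P_R^perp onto indices {R..}.\<close>

definition voronoi_cell :: "'a::euclidean_space set \<Rightarrow> (nat \<Rightarrow> 'a) \<Rightarrow> nat \<Rightarrow> nat \<Rightarrow> 'a set" where
  "voronoi_cell D t N n = {s \<in> D. \<forall>m<N. m \<noteq> n \<longrightarrow> dist s (t n) \<le> dist s (t m)}"

definition quad_weight :: "'a::euclidean_space set \<Rightarrow> ('a \<Rightarrow> real) \<Rightarrow> (nat \<Rightarrow> 'a) \<Rightarrow> nat \<Rightarrow> nat \<Rightarrow> real" where
  "quad_weight D \<nu> t N n = (LINT s:voronoi_cell D t N n|lebesgue. \<nu> s)"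

definition Umat :: "'a::euclidean_space set \<Rightarrow> ('a \<Rightarrow> real) \<Rightarrow> (nat \<Rightarrow> 'a \<Rightarrow> real) \<Rightarrow> (nat \<Rightarrow> 'a) \<Rightarrow> nat \<Rightarrow> nat \<Rightarrow> nat \<Rightarrow> real" where
  "Umat D \<nu> \<phi> t N n i = sqrt (quad_weight D \<nu> t N n) * \<phi> i (t n)"

definition gram :: "'a::euclidean_space set \<Rightarrow> ('a \<Rightarrow> real) \<Rightarrow> (nat \<Rightarrow> 'a \<Rightarrow> real) \<Rightarrow> (nat \<Rightarrow> 'a) \<Rightarrow> nat \<Rightarrow> nat \<Rightarrow> nat \<Rightarrow> real" where
  "gram D \<nu> \<phi> t N i j = (\<Sum>n<N. Umat D \<nu> \<phi> t N n i * Umat D \<nu> \<phi> t N n j)"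

definition l2_opnorm :: "nat \<Rightarrow> (nat \<Rightarrow> nat \<Rightarrow> real) \<Rightarrow> real" where
  "l2_opnorm M A = Sup {sqrt (\<Sum>i<M. (\<Sum>j<M. A i j * x j)\<^sup>2) | x. (\<Sum>j<M. (x j)\<^sup>2) \<le> 1}"

definition linf_opnorm :: "nat \<Rightarrow> (nat \<Rightarrow> nat \<Rightarrow> real) \<Rightarrow> real" where
  "linf_opnorm M A = Max (insert 0 {\<Sum>j<M. \<bar>A i j\<bar> | i. i < M})"

definition E2 :: "'a::euclidean_space set \<Rightarrow> ('a \<Rightarrow> real) \<Rightarrow> (nat \<Rightarrow> 'a \<Rightarrow> real) \<Rightarrow> (nat \<Rightarrow> 'a) \<Rightarrow> nat \<Rightarrow> nat \<Rightarrow> real" where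
  "E2 D \<nu> \<phi> t N M = l2_opnorm M (\<lambda>i j. (if i = j then 1 else 0) - gram D \<nu> \<phi> t N i j)"

definition Einf :: "'a::euclidean_space set \<Rightarrow> ('a \<Rightarrow> real) \<Rightarrow> (nat \<Rightarrow> 'a \<Rightarrow> real) \<Rightarrow> (nat \<Rightarrow> 'a) \<Rightarrow> nat \<Rightarrow> nat \<Rightarrow> real" where
  "Einf D \<nu> \<phi> t N M = linf_opnorm M (\<lambda>i j. (if i = j then 1 else 0) - gram D \<nu> \<phi> t N i j)"

definition Eerr :: "'a::euclidean_space set \<Rightarrow> ('a \<Rightarrow> real) \<Rightarrow> (nat \<Rightarrow> 'a \<Rightarrow> real) \<Rightarrow> (nat \<Rightarrow> 'a) \<Rightarrow> nat \<Rightarrow> nat \<Rightarrow> real" where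
  "Eerr D \<nu> \<phi> t N M = max (E2 D \<nu> \<phi> t N M) (Einf D \<nu> \<phi> t N M)"

text \<open>F = l^infinity operator norm (max absolute row sum, possibly infinite) of
  P_R^perp W^{-1} U^* U P_M.\<close>
definition Ferr :: "'a::euclidean_space set \<Rightarrow> ('a \<Rightarrow> real) \<Rightarrow> (nat \<Rightarrow> 'a \<Rightarrow> real) \<Rightarrow> (nat \<Rightarrow> 'a) \<Rightarrow> nat \<Rightarrow> (nat \<Rightarrow> real) \<Rightarrow> nat \<Rightarrow> nat \<Rightarrow> ereal" where
  "Ferr D \<nu> \<phi> t N w M R = (SUP i\<in>{R..}. ereal (\<Sum>j<M. \<bar>gram D \<nu> \<phi> t N i j / w i\<bar>))"

text \<open>Sup norm, taken over the closure of D (where the points live).\<close>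
definition linf_norm :: "'a::euclidean_space set \<Rightarrow> ('a \<Rightarrow> real) \<Rightarrow> real" where
  "linf_norm D f = (SUP s\<in>closure D. \<bar>f s\<bar>)"

end

theory Submission
  imports Defs "HOL-Analysis.Analysis"
begin

text \<open>Row i of \<open>U\<^sup>*U\<close> restricted to the first M columns is \<open>P\<^sub>M U\<^sup>* a\<close> with \<open>a = U e\<^sub>i\<close>, and
  \<open>\<parallel>P\<^sub>M U\<^sup>* a\<parallel>\<^sup>2 \<le> (1 + E\<^sub>2) \<parallel>a\<parallel>\<^sup>2\<close> because \<open>\<parallel>U P\<^sub>M y\<parallel>\<^sup>2 = \<parallel>y\<parallel>\<^sup>2 - \<langle>y, (P\<^sub>M - P\<^sub>M U\<^sup>*U P\<^sub>M) y\<rangle>\<close>.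
  Moreover \<open>\<parallel>a\<parallel>\<^sup>2 = \<Sum>\<^sub>n \<tau>\<^sub>n \<phi>\<^sub>i(t\<^sub>n)\<^sup>2 \<le> \<parallel>\<phi>\<^sub>i\<parallel>\<^sub>\<infinity>\<^sup>2\<close>, since the Voronoi cells overlap only on
  bisecting hyperplanes, which are null, so \<open>\<Sum>\<^sub>n \<tau>\<^sub>n \<le> \<integral>\<^sub>D \<nu> = 1\<close>. Cauchy-Schwarz turns the
  \<open>\<ell>\<^sup>2\<close> bound on the row into the \<open>\<ell>\<^sup>1\<close> bound \<open>\<surd>M \<parallel>\<phi>\<^sub>i\<parallel>\<^sub>\<infinity> \<surd>(1 + E)\<close>, and dividing by
  \<open>w\<^sub>i = z\<^sub>i \<parallel>\<phi>\<^sub>i\<parallel>\<^sub>\<infinity>\<close> gives the claim.\<close>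

lemma abs_sum_mult_le_sqrt_sum_squares:
  fixes f g :: "'b \<Rightarrow> real"
  shows "\<bar>\<Sum>i\<in>I. f i * g i\<bar> \<le> sqrt (\<Sum>i\<in>I. (f i)\<^sup>2) * sqrt (\<Sum>i\<in>I. (g i)\<^sup>2)"
proof -
  have "\<bar>\<Sum>i\<in>I. f i * g i\<bar> \<le> (\<Sum>i\<in>I. \<bar>f i\<bar> * \<bar>g i\<bar>)"
    using sum_abs[of "\<lambda>i. f i * g i" I] by (simp add: abs_mult)
  also have "\<dots> \<le> L2_set f I * L2_set g I" by (rule L2_set_mult_ineq)
  finally show ?thesis by (simp add: L2_set_def)
qed

lemma bdd_above_l2_opnorm_set:
  fixes M :: nat and A :: "nat \<Rightarrow> nat \<Rightarrow> real"
  shows "bdd_above {sqrt (\<Sum>i<M. (\<Sum>j<M. A i j * x j)\<^sup>2) | x. (\<Sum>j<M. (x j)\<^sup>2) \<le> (1::real)}"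
proof (rule bdd_aboveI)
  fix v assume "v \<in> {sqrt (\<Sum>i<M. (\<Sum>j<M. A i j * x j)\<^sup>2) | x. (\<Sum>j<M. (x j)\<^sup>2) \<le> (1::real)}"
  then obtain x where v: "v = sqrt (\<Sum>i<M. (\<Sum>j<M. A i j * x j)\<^sup>2)"
    and x: "(\<Sum>j<M. (x j)\<^sup>2) \<le> 1" by blast
  have "(x j)\<^sup>2 \<le> 1\<^sup>2" if "j < M" for j
  proof -
    have "(x j)\<^sup>2 \<le> (\<Sum>j<M. (x j)\<^sup>2)" using that by (intro member_le_sum) auto
    then show ?thesis using x by simp
  qed
  then have xj: "\<bar>x j\<bar> \<le> 1" if "j < M" for j
    using that abs_le_square_iff by (metis abs_one)
  have "\<bar>\<Sum>j<M. A i j * x j\<bar> \<le> (\<Sum>j<M. \<bar>A i j\<bar>)" for i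
  proof -
    have "\<bar>\<Sum>j<M. A i j * x j\<bar> \<le> (\<Sum>j<M. \<bar>A i j * x j\<bar>)" by (rule sum_abs)
    also have "\<dots> \<le> (\<Sum>j<M. \<bar>A i j\<bar>)"
      using xj by (intro sum_mono) (auto simp: abs_mult intro: mult_left_le)
    finally show ?thesis .
  qed
  then have "(\<Sum>j<M. A i j * x j)\<^sup>2 \<le> (\<Sum>j<M. \<bar>A i j\<bar>)\<^sup>2" for i
    by (metis abs_le_square_iff abs_of_nonneg sum_nonneg abs_ge_zero)
  then show "v \<le> sqrt (\<Sum>i<M. (\<Sum>j<M. \<bar>A i j\<bar>)\<^sup>2)"
    unfolding v by (intro real_sqrt_le_mono sum_mono) auto
qed

lemma l2_opnorm_nonneg: "l2_opnorm M A \<ge> 0"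
proof -
  have "sqrt (\<Sum>i<M. (\<Sum>j<M. A i j * (\<lambda>_. 0::real) j)\<^sup>2) \<le> l2_opnorm M A"
    unfolding l2_opnorm_def
    by (rule cSup_upper[OF _ bdd_above_l2_opnorm_set]) (rule CollectI, rule exI[of _ "\<lambda>_. 0"], simp)
  then show ?thesis by simp
qed

lemma l2_opnorm_bound:
  fixes x :: "nat \<Rightarrow> real"
  shows "sqrt (\<Sum>i<M. (\<Sum>j<M. A i j * x j)\<^sup>2) \<le> l2_opnorm M A * sqrt (\<Sum>j<M. (x j)\<^sup>2)"
proof (cases "(\<Sum>j<M. (x j)\<^sup>2) = 0")
  case True
  then have "x j = 0" if "j < M" for j using that by (simp add: sum_nonneg_eq_0_iff)
  then show ?thesis using True by simp
next
  case False
  define q where "q = sqrt (\<Sum>j<M. (x j)\<^sup>2)"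
  have q: "q > 0" using False unfolding q_def by (simp add: sum_nonneg order_le_neq_trans)
  define x' where "x' j = x j / q" for j
  have "(\<Sum>j<M. (x' j)\<^sup>2) = (\<Sum>j<M. (x j)\<^sup>2) / q\<^sup>2"
    unfolding x'_def by (simp add: power_divide sum_divide_distrib)
  also have "\<dots> = 1" using q False unfolding q_def by (simp add: sum_nonneg)
  finally have "sqrt (\<Sum>i<M. (\<Sum>j<M. A i j * x' j)\<^sup>2) \<le> l2_opnorm M A"
    unfolding l2_opnorm_def by (intro cSup_upper[OF _ bdd_above_l2_opnorm_set]) auto
  moreover have "(\<Sum>i<M. (\<Sum>j<M. A i j * x' j)\<^sup>2) = (\<Sum>i<M. (\<Sum>j<M. A i j * x j)\<^sup>2) / q\<^sup>2"
    unfolding x'_def by (simp add: power_divide sum_divide_distrib[symmetric])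
  ultimately have "sqrt (\<Sum>i<M. (\<Sum>j<M. A i j * x j)\<^sup>2) / q \<le> l2_opnorm M A"
    using q by (simp add: real_sqrt_divide)
  then show ?thesis using q unfolding q_def[symmetric] by (simp add: divide_le_eq)
qed

lemma sum_sq_mult_le_one_plus_defect:
  fixes U :: "nat \<Rightarrow> nat \<Rightarrow> real" and y :: "nat \<Rightarrow> real"
  shows "(\<Sum>n<N. (\<Sum>j<M. U n j * y j)\<^sup>2)
           \<le> (1 + l2_opnorm M (\<lambda>i j. (if i = j then 1 else 0) - (\<Sum>n<N. U n i * U n j))) * (\<Sum>j<M. (y j)\<^sup>2)"
    (is "?B \<le> (1 + ?E) * ?Y")
proof -
  define r where "r j = (\<Sum>k<M. ((if j = k then 1 else 0) - (\<Sum>n<N. U n j * U n k)) * y k)" for j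
  have Y0: "?Y \<ge> 0" by (simp add: sum_nonneg)
  have r_eq: "r j = y j - (\<Sum>k<M. (\<Sum>n<N. U n j * U n k) * y k)" if "j < M" for j
  proof -
    have "r j = (\<Sum>k<M. (if j = k then y k else 0)) - (\<Sum>k<M. (\<Sum>n<N. U n j * U n k) * y k)"
      unfolding r_def sum_subtractf[symmetric] by (intro sum.cong) (auto simp: algebra_simps)
    then show ?thesis using that by (simp add: sum.delta)
  qed
  have "?B = (\<Sum>j<M. \<Sum>k<M. y j * (\<Sum>n<N. U n j * U n k) * y k)"
    unfolding power2_eq_square
    by (simp add: sum_product sum_distrib_left sum_distrib_right mult_ac
        sum.swap[of _ "{..<M}" "{..<N}"])
  also have "\<dots> = ?Y - (\<Sum>j<M. y j * r j)"
    unfolding power2_eq_square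
    by (simp add: r_eq right_diff_distrib sum_subtractf sum_distrib_left mult_ac)
  finally have B_eq: "?B = ?Y - (\<Sum>j<M. y j * r j)" .
  have "\<bar>\<Sum>j<M. y j * r j\<bar> \<le> sqrt ?Y * sqrt (\<Sum>j<M. (r j)\<^sup>2)"
    by (rule abs_sum_mult_le_sqrt_sum_squares)
  also have "\<dots> \<le> sqrt ?Y * (?E * sqrt ?Y)"
    unfolding r_def by (intro mult_left_mono l2_opnorm_bound) (auto simp: sum_nonneg)
  also have "\<dots> = ?E * ?Y" using Y0 by (simp add: mult_ac)
  finally show ?thesis using B_eq by (simp add: algebra_simps)
qed

lemma sum_sq_transpose_mult_le:
  fixes U :: "nat \<Rightarrow> nat \<Rightarrow> real" and a :: "nat \<Rightarrow> real"
  shows "(\<Sum>j<M. (\<Sum>n<N. a n * U n j)\<^sup>2)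
           \<le> (\<Sum>n<N. (a n)\<^sup>2) * (1 + l2_opnorm M (\<lambda>i j. (if i = j then 1 else 0) - (\<Sum>n<N. U n i * U n j)))"
    (is "?Y \<le> ?A * (1 + ?E)")
proof -
  define y where "y j = (\<Sum>n<N. a n * U n j)" for j
  define B where "B = (\<Sum>n<N. (\<Sum>j<M. U n j * y j)\<^sup>2)"
  have Y0: "?Y \<ge> 0" and A0: "?A \<ge> 0" and E0: "?E \<ge> 0"
    by (simp_all add: sum_nonneg l2_opnorm_nonneg)
  have "?Y = (\<Sum>n<N. a n * (\<Sum>j<M. U n j * y j))"
    unfolding y_def power2_eq_square
    by (simp add: sum_distrib_left sum_distrib_right mult_ac sum.swap[of _ "{..<M}" "{..<N}"])
  also have "\<dots> \<le> sqrt ?A * sqrt B"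
    unfolding B_def by (rule order_trans[OF abs_ge_self abs_sum_mult_le_sqrt_sum_squares])
  finally have "?Y * ?Y \<le> (sqrt ?A * sqrt B) * (sqrt ?A * sqrt B)"
    using Y0 by (intro mult_mono) auto
  also have "\<dots> = ?A * B" using A0 by (simp add: B_def sum_nonneg mult_ac)
  also have "\<dots> \<le> ?A * ((1 + ?E) * ?Y)"
    unfolding B_def y_def using A0 sum_sq_mult_le_one_plus_defect by (intro mult_left_mono)
  finally have "?Y * ?Y \<le> (?A * (1 + ?E)) * ?Y" by (simp add: mult_ac)
  then show ?thesis
    using Y0 A0 E0 by (cases "?Y = 0") auto
qed

lemma bisector_eq_hyperplane:
  fixes a b :: "'a::euclidean_space"
  shows "{s. dist s a = dist s b} = {s. (2 *\<^sub>R (b - a)) \<bullet> s = b \<bullet> b - a \<bullet> a}"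
proof -
  have "dist s a = dist s b \<longleftrightarrow> (2 *\<^sub>R (b - a)) \<bullet> s = b \<bullet> b - a \<bullet> a" for s
  proof -
    have "dist s a = dist s b \<longleftrightarrow> (s - a) \<bullet> (s - a) = (s - b) \<bullet> (s - b)"
      by (metis dist_norm norm_eq_sqrt_inner real_sqrt_eq_iff)
    also have "\<dots> \<longleftrightarrow> (2 *\<^sub>R (b - a)) \<bullet> s = b \<bullet> b - a \<bullet> a"
      by (auto simp: inner_diff_left inner_diff_right inner_commute algebra_simps)
    finally show ?thesis .
  qed
  then show ?thesis by auto
qed

lemma bisector_null_sets:
  fixes a b :: "'a::euclidean_space"
  assumes "a \<noteq> b"
  shows "{s. dist s a = dist s b} \<in> null_sets lebesgue"
  unfolding bisector_eq_hyperplane negligible_iff_null_sets[symmetric]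
  using assms by (intro negligible_hyperplane) auto

lemma voronoi_cell_sets:
  assumes "open D"
  shows "voronoi_cell D t N n \<in> sets lebesgue"
proof -
  define C where "C = (\<Inter>m\<in>{m. m < N \<and> m \<noteq> n}. {s. dist s (t n) \<le> dist s (t m)})"
  have "closed C" unfolding C_def
    by (intro closed_INT ballI closed_Collect_le continuous_intros)
  moreover have "voronoi_cell D t N n = D \<inter> C" by (auto simp: C_def voronoi_cell_def)
  ultimately show ?thesis
    using assms by (simp add: borel_closed borel_open sets_completionI_sets)
qed

lemma quad_weight_nonneg:
  assumes "\<And>s. s \<in> D \<Longrightarrow> \<nu> s \<ge> 0"
  shows "quad_weight D \<nu> t N n \<ge> 0"
  unfolding quad_weight_def set_lebesgue_integral_def
  using assms by (intro integral_nonneg_AE AE_I2) (auto simp: indicator_def voronoi_cell_def)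

lemma voronoi_cells_meet_on_bisector:
  assumes "n < N" "m < N" "m \<noteq> n" "s \<in> voronoi_cell D t N n" "s \<in> voronoi_cell D t N m"
  shows "dist s (t n) = dist s (t m)"
  using assms by (force simp: voronoi_cell_def)

lemma sum_quad_weight_le_1:
  fixes D :: "'a::euclidean_space set" and t :: "nat \<Rightarrow> 'a"
  assumes "open D" and nonneg: "\<And>s. s \<in> D \<Longrightarrow> \<nu> s \<ge> 0"
    and int: "set_integrable lebesgue D \<nu>" and total: "(LINT s:D|lebesgue. \<nu> s) = 1"
    and "inj_on t {..<N}"
  shows "(\<Sum>n<N. quad_weight D \<nu> t N n) \<le> 1"
proof -
  define V where "V = voronoi_cell D t N"
  define Z where "Z = (\<Union>n<N. \<Union>m\<in>{m. m < N \<and> m \<noteq> n}. {s. dist s (t n) = dist s (t m)})"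
  have V_sub: "V n \<subseteq> D" for n by (auto simp: V_def voronoi_cell_def)
  have V_int: "set_integrable lebesgue (V n) \<nu>" for n
    using set_integrable_subset[OF int _ V_sub] voronoi_cell_sets[OF \<open>open D\<close>] by (simp add: V_def)
  have Z_null: "Z \<in> null_sets lebesgue" unfolding Z_def
    using \<open>inj_on t {..<N}\<close>
    by (intro null_sets.finite_UN bisector_null_sets) (auto dest: inj_onD)
  have "(\<Sum>n<N. indicator (V n) s *\<^sub>R \<nu> s) \<le> indicator D s *\<^sub>R \<nu> s" if "s \<notin> Z" for s
  proof (cases "\<exists>n<N. s \<in> V n")
    case False
    then show ?thesis using nonneg by (auto simp: indicator_def intro!: sum.neutral)
  next
    case True
    then obtain n where n: "n < N" "s \<in> V n" by auto
    have "s \<notin> V m" if "m < N" "m \<noteq> n" for m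
      using voronoi_cells_meet_on_bisector[of n N m s D t] n that \<open>s \<notin> Z\<close>
      by (auto simp: V_def Z_def)
    then have "(\<Sum>m\<in>{..<N}-{n}. indicator (V m) s *\<^sub>R \<nu> s) = 0"
      by (intro sum.neutral) auto
    moreover have "(\<Sum>m<N. indicator (V m) s *\<^sub>R \<nu> s)
        = indicator (V n) s *\<^sub>R \<nu> s + (\<Sum>m\<in>{..<N}-{n}. indicator (V m) s *\<^sub>R \<nu> s)"
      using n by (intro sum.remove) auto
    ultimately show ?thesis using n V_sub[of n] by (auto simp: indicator_def)
  qed
  then have AE_le: "AE s in lebesgue. (\<Sum>n<N. indicator (V n) s *\<^sub>R \<nu> s) \<le> indicator D s *\<^sub>R \<nu> s"
    by (intro AE_I'[OF Z_null]) auto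
  have "(\<Sum>n<N. quad_weight D \<nu> t N n) = integral\<^sup>L lebesgue (\<lambda>s. \<Sum>n<N. indicator (V n) s *\<^sub>R \<nu> s)"
    unfolding quad_weight_def V_def set_lebesgue_integral_def
    using V_int unfolding V_def set_integrable_def by (intro Bochner_Integration.integral_sum[symmetric]) auto
  also have "\<dots> \<le> integral\<^sup>L lebesgue (\<lambda>s. indicator D s *\<^sub>R \<nu> s)"
  proof (rule integral_mono_AE[OF _ _ AE_le])
    show "integrable lebesgue (\<lambda>s. \<Sum>n<N. indicator (V n) s *\<^sub>R \<nu> s)"
      using V_int unfolding set_integrable_def by (intro Bochner_Integration.integrable_sum)
  qed (use int in \<open>simp add: set_integrable_def\<close>)
  also have "\<dots> = 1" using total unfolding set_lebesgue_integral_def .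
  finally show ?thesis .
qed

lemma abs_le_linf_norm:
  assumes "bounded (f ` closure D)" and "s \<in> closure D"
  shows "\<bar>f s\<bar> \<le> linf_norm D f"
proof -
  obtain B where "\<And>x. x \<in> f ` closure D \<Longrightarrow> norm x \<le> B"
    using assms(1) unfolding bounded_iff by blast
  then have "bdd_above ((\<lambda>s. \<bar>f s\<bar>) ` closure D)"
    by (intro bdd_aboveI2[where M=B]) auto
  then show ?thesis unfolding linf_norm_def using assms(2) by (intro cSUP_upper)
qed

lemma sum_sq_Umat_le_linf_norm:
  fixes D :: "'a::euclidean_space set" and t :: "nat \<Rightarrow> 'a"
  assumes "open D" and "\<And>s. s \<in> D \<Longrightarrow> \<nu> s \<ge> 0"
    and "set_integrable lebesgue D \<nu>" and "(LINT s:D|lebesgue. \<nu> s) = 1"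
    and "inj_on t {..<N}" and "\<And>n. n < N \<Longrightarrow> t n \<in> closure D"
    and "bounded (\<phi> i ` closure D)"
  shows "(\<Sum>n<N. (Umat D \<nu> \<phi> t N n i)\<^sup>2) \<le> (linf_norm D (\<phi> i))\<^sup>2"
proof -
  let ?\<tau> = "quad_weight D \<nu> t N" and ?L = "linf_norm D (\<phi> i)"
  have \<tau>_nonneg: "?\<tau> n \<ge> 0" for n using quad_weight_nonneg assms(2) .
  have "(\<Sum>n<N. (Umat D \<nu> \<phi> t N n i)\<^sup>2) = (\<Sum>n<N. ?\<tau> n * (\<phi> i (t n))\<^sup>2)"
    using \<tau>_nonneg by (simp add: Umat_def power_mult_distrib)
  also have "\<dots> \<le> (\<Sum>n<N. ?\<tau> n * ?L\<^sup>2)"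
  proof (intro sum_mono mult_left_mono \<tau>_nonneg)
    fix n assume "n \<in> {..<N}"
    then have "\<bar>\<phi> i (t n)\<bar> \<le> ?L" using abs_le_linf_norm assms(6,7) by blast
    then show "(\<phi> i (t n))\<^sup>2 \<le> ?L\<^sup>2" using power_mono[of _ _ 2] by fastforce
  qed
  also have "\<dots> = ?L\<^sup>2 * (\<Sum>n<N. ?\<tau> n)" by (simp add: sum_distrib_right mult_ac)
  also have "\<dots> \<le> ?L\<^sup>2"
    using sum_quad_weight_le_1[OF assms(1-5)] by (simp add: mult_left_le)
  finally show ?thesis .
qed

lemma sum_abs_gram_le:
  fixes D :: "'a::euclidean_space set" and t :: "nat \<Rightarrow> 'a"
  assumes "open D" and "\<And>s. s \<in> D \<Longrightarrow> \<nu> s \<ge> 0"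
    and "set_integrable lebesgue D \<nu>" and "(LINT s:D|lebesgue. \<nu> s) = 1"
    and "inj_on t {..<N}" and "\<And>n. n < N \<Longrightarrow> t n \<in> closure D"
    and "bounded (\<phi> i ` closure D)"
  shows "(\<Sum>j<M. \<bar>gram D \<nu> \<phi> t N i j\<bar>)
           \<le> sqrt (real M) * \<bar>linf_norm D (\<phi> i)\<bar> * sqrt (1 + E2 D \<nu> \<phi> t N M)"
proof -
  let ?G = "gram D \<nu> \<phi> t N i" and ?L = "linf_norm D (\<phi> i)" and ?E = "E2 D \<nu> \<phi> t N M"
  have "?E \<ge> 0" unfolding E2_def by (rule l2_opnorm_nonneg)
  have "(\<Sum>j<M. (?G j)\<^sup>2) \<le> (\<Sum>n<N. (Umat D \<nu> \<phi> t N n i)\<^sup>2) * (1 + ?E)"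
    using sum_sq_transpose_mult_le unfolding gram_def E2_def .
  also have "\<dots> \<le> ?L\<^sup>2 * (1 + ?E)"
    using sum_sq_Umat_le_linf_norm[where \<phi>=\<phi> and i=i, OF assms] \<open>?E \<ge> 0\<close> by (intro mult_right_mono) auto
  finally have G_sq: "(\<Sum>j<M. (?G j)\<^sup>2) \<le> ?L\<^sup>2 * (1 + ?E)" .
  have "(\<Sum>j<M. \<bar>?G j\<bar>) \<le> sqrt (real M) * sqrt (\<Sum>j<M. (?G j)\<^sup>2)"
    using abs_sum_mult_le_sqrt_sum_squares[of "\<lambda>_. 1" "\<lambda>j. \<bar>?G j\<bar>" "{..<M}"] by simp
  also have "\<dots> \<le> sqrt (real M) * sqrt (?L\<^sup>2 * (1 + ?E))"
    using G_sq by (intro mult_left_mono real_sqrt_le_mono) auto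
  finally show ?thesis by (simp add: real_sqrt_mult mult_ac)
qed

theorem lemma5p4:
  fixes D :: "'a::euclidean_space set" and \<nu> :: "'a \<Rightarrow> real"
    and \<phi> :: "nat \<Rightarrow> 'a \<Rightarrow> real" and t :: "nat \<Rightarrow> 'a"
    and N M R :: nat and z w :: "nat \<Rightarrow> real"
  assumes "open D" and "connected D"
    and "\<And>s. s \<in> D \<Longrightarrow> \<nu> s \<ge> 0"
    and "set_integrable lebesgue D \<nu>"
    and "(LINT s:D|lebesgue. \<nu> s) = 1"
    and "\<And>i j. set_integrable lebesgue D (\<lambda>s. \<nu> s * \<phi> i s * \<phi> j s)"
    and "\<And>i j. (LINT s:D|lebesgue. \<nu> s * \<phi> i s * \<phi> j s) = (if i = j then 1 else 0)"
    and "\<And>i. bounded (\<phi> i ` closure D)"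
    and "\<And>n. n < N \<Longrightarrow> t n \<in> closure D"
    and "inj_on t {..<N}"
    and "\<And>i. z i \<ge> 1"
    and "\<And>i. w i = z i * linf_norm D (\<phi> i)"
  shows "Ferr D \<nu> \<phi> t N w M R
           \<le> ereal (sqrt (real M) * sqrt (1 + Eerr D \<nu> \<phi> t N M) / (INF i\<in>{R..}. z i))"
proof -
  let ?E = "Eerr D \<nu> \<phi> t N M" and ?z = "INF i\<in>{R..}. z i"
  have "E2 D \<nu> \<phi> t N M \<ge> 0" unfolding E2_def by (rule l2_opnorm_nonneg)
  then have E_nonneg: "?E \<ge> 0" by (simp add: Eerr_def)
  have z_bdd: "bdd_below (z ` {R..})" using assms(11) by (intro bdd_belowI2) auto
  have z_inf_ge_1: "?z \<ge> 1" using assms(11) by (intro cINF_greatest) auto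
  have row: "(\<Sum>j<M. \<bar>gram D \<nu> \<phi> t N i j / w i\<bar>) \<le> sqrt (real M) * sqrt (1 + ?E) / ?z"
    if "i \<ge> R" for i
  proof -
    let ?L = "linf_norm D (\<phi> i)"
    have "?z \<le> z i" using that by (intro cINF_lower z_bdd) simp
    have abs_w: "\<bar>w i\<bar> = z i * \<bar>?L\<bar>" using assms(11,12)[of i] by (simp add: abs_mult)
    have "(\<Sum>j<M. \<bar>gram D \<nu> \<phi> t N i j\<bar>) \<le> sqrt (real M) * \<bar>?L\<bar> * sqrt (1 + E2 D \<nu> \<phi> t N M)"
      by (rule sum_abs_gram_le[OF assms(1,3,4,5,10,9,8)])
    also have "\<dots> \<le> sqrt (real M) * \<bar>?L\<bar> * sqrt (1 + ?E)"
      by (intro mult_left_mono real_sqrt_le_mono) (auto simp: Eerr_def)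
    finally have "(\<Sum>j<M. \<bar>gram D \<nu> \<phi> t N i j / w i\<bar>)
        \<le> sqrt (real M) * \<bar>?L\<bar> * sqrt (1 + ?E) / \<bar>w i\<bar>"
      by (simp add: sum_divide_distrib[symmetric] divide_right_mono)
    also have "\<dots> \<le> sqrt (real M) * sqrt (1 + ?E) / z i"
      \<comment> \<open>if \<open>\<parallel>\<phi>\<^sub>i\<parallel>\<^sub>\<infinity> = 0\<close> then \<open>w\<^sub>i = 0\<close> and the row is 0, as \<open>x / 0 = 0\<close>\<close>
      using abs_w E_nonneg assms(11)[of i] by (cases "?L = 0") auto
    also have "\<dots> \<le> sqrt (real M) * sqrt (1 + ?E) / ?z"
      using \<open>?z \<le> z i\<close> z_inf_ge_1 E_nonneg by (intro divide_left_mono) auto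
    finally show ?thesis .
  qed
  then show ?thesis unfolding Ferr_def by (intro SUP_least) auto
qed

end
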